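(* Let $k, D, N$ be positive integers, let $G \subseteq S_k$ be a permutation group (a subgroup of the symmetric group on $\{1,\dots,k\}$), let $\Theta \in \mathbb{R}^{D \times D \times \dots \times D}$ be a real tensor of rank (order) $k$, and let $X \in \mathbb{R}^{N \times D}$, with entries $X^{j}_{i}$ for $1 \le j \le N$, $1 \le i \le D$. Define the order-$k$ tensor $\mathcal{S} \in \mathbb{R}^{D\times\dots\times D}$ by $$\mathcal{S}^{i_1 i_2 \dots i_k} = \sum_{\sigma \in G} \Theta^{i_{\sigma(1)} i_{\sigma(2)} \dots i_{\sigma(k)}},$$ the order-$k$ tensor $\mathcal{O} \in \mathbb{R}^{N\times\dots\times N}$ by $$\mathcal{O}^{j_1 j_2 \dots j_k} = \sum_{i_1,\dots,i_k=1}^{D} X^{j_1}_{i_1} X^{j_2}_{i_2} \cdots X^{j_k}_{i_k}\, \mathcal{S}^{i_1 i_2 \dots i_k},$$ and the order-$k$ tensor $\mathcal{P} \in \mathbb{R}^{N\times\dots\times N}$ by $$\mathcal{P}^{j_1 j_2 \dots j_k} = \frac{\exp\left(\mathcal{O}^{j_1 j_2 \dots j_k}\right)}{\sum_{l_1, \dots, l_k=1}^{N} \exp\left(\mathcal{O}^{l_1 l_2 \dots l_k}\right)}.$$ Then $\mathcal{P}$ is $G$-symmetric, i.e. for every $\sigma \in G$ and all indices $j_1,\dots,j_k \in \{1,\dots,N\}$, $$\mathcal{P}^{j_1 j_2 \dots j_k} = \mathcal{P}^{j_{\sigma(1)} j_{\sigma(2)} \dots j_{\sigma(k)}}.$$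
   Context: Tensors are indexed by superscripts; for an order-$k$ tensor $T$ and a permutation $\sigma \in S_k$, $T^{i_{\sigma(1)} \dots i_{\sigma(k)}}$ denotes the entry of $T$ whose $m$-th index is $i_{\sigma(m)}$. *)

theory Defs
  imports Complex_Main "HOL-Algebra.Sym_Groups"
begin

text \<open>Index tuples of length k with entries in {1..n}: extensional functions {1..k} -> {1..n}.
An order-k tensor with side n is a real-valued function on such tuples.\<close>

definition idx :: "nat \<Rightarrow> nat \<Rightarrow> (nat \<Rightarrow> nat) set" where
  "idx k n = PiE {1..k} (\<lambda>_. {1..n})"

definition symS :: "(nat \<Rightarrow> nat) set \<Rightarrow> ((nat \<Rightarrow> nat) \<Rightarrow> real) \<Rightarrow> ((nat \<Rightarrow> nat) \<Rightarrow> real)" where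
  "symS G \<Theta> = (\<lambda>i. \<Sum>\<sigma>\<in>G. \<Theta> (i \<circ> \<sigma>))"

definition tensorO :: "nat \<Rightarrow> nat \<Rightarrow> (nat \<Rightarrow> nat \<Rightarrow> real) \<Rightarrow> ((nat \<Rightarrow> nat) \<Rightarrow> real) \<Rightarrow> ((nat \<Rightarrow> nat) \<Rightarrow> real)" where
  "tensorO k D X S = (\<lambda>j. \<Sum>i\<in>idx k D. (\<Prod>m\<in>{1..k}. X (j m) (i m)) * S i)"

definition softmaxT :: "nat \<Rightarrow> nat \<Rightarrow> ((nat \<Rightarrow> nat) \<Rightarrow> real) \<Rightarrow> ((nat \<Rightarrow> nat) \<Rightarrow> real)" where
  "softmaxT k N T = (\<lambda>j. exp (T j) / (\<Sum>l\<in>idx k N. exp (T l)))"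

end

theory Submission
  imports Defs
begin

text \<open>Left translation by \<open>\<sigma> \<in> G\<close> permutes \<open>G\<close>, so the symmetrised tensor \<open>S\<close> is invariant
  under permuting its slots by \<open>\<sigma>\<close>. Contracting every slot with the same matrix \<open>X\<close> commutes
  with permuting the slots, so \<open>O\<close> inherits this invariance; softmax acts entrywise with a
  normaliser that does not depend on the entry, hence so does \<open>P\<close>.\<close>

lemma sym_group_subgroup_permutes:
  assumes "subgroup G (sym_group k)" "\<sigma> \<in> G"
  shows "\<sigma> permutes {1..k}"
  using subgroup.mem_carrier[OF assms] by (simp add: sym_group_carrier)

lemma sym_group_subgroup_bij_betw_left_translation:
  assumes "subgroup G (sym_group k)" "\<sigma> \<in> G"
  shows "bij_betw ((\<circ>) \<sigma>) G G"
proof -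
  interpret H: group "(sym_group k)\<lparr>carrier := G\<rparr>"
    using subgroup.subgroup_is_group[OF assms(1) sym_group_is_group] .
  show ?thesis
    unfolding bij_betw_def
    using H.inj_on_cmult[of \<sigma>] H.surj_const_mult[of \<sigma>] assms(2) by (simp add: sym_group_mult)
qed

lemma symS_comp_subgroup:
  assumes "subgroup G (sym_group k)" "\<sigma> \<in> G"
  shows "symS G \<Theta> (i \<circ> \<sigma>) = symS G \<Theta> i"
proof -
  have "(\<Sum>\<tau>\<in>G. \<Theta> (i \<circ> (\<sigma> \<circ> \<tau>))) = (\<Sum>\<tau>\<in>G. \<Theta> (i \<circ> \<tau>))"
    using sum.reindex_bij_betw[OF sym_group_subgroup_bij_betw_left_translation[OF assms]] .
  then show ?thesis
    unfolding symS_def by (simp add: comp_assoc)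
qed

lemma comp_permutes_in_idx:
  assumes "\<sigma> permutes {1..k}" "i \<in> idx k n"
  shows "i \<circ> \<sigma> \<in> idx k n"
  using assms permutes_in_image[OF assms(1)] permutes_not_in[OF assms(1)]
  by (auto simp: idx_def PiE_def extensional_def)

lemma bij_betw_idx_comp_permutes:
  assumes "\<sigma> permutes {1..k}"
  shows "bij_betw (\<lambda>i. i \<circ> \<sigma>) (idx k n) (idx k n)"
proof (rule bij_betw_byWitness[where f' = "\<lambda>i. i \<circ> inv' \<sigma>"])
  show "(\<lambda>i. i \<circ> \<sigma>) ` idx k n \<subseteq> idx k n" "(\<lambda>i. i \<circ> inv' \<sigma>) ` idx k n \<subseteq> idx k n"
    using comp_permutes_in_idx assms permutes_inv by blast+
qed (use assms in \<open>auto simp: comp_assoc permutes_inv_o\<close>)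

lemma tensorO_comp_permutes:
  assumes "\<sigma> permutes {1..k}" and S_inv: "\<And>i. S (i \<circ> \<sigma>) = S i"
  shows "tensorO k D X S (j \<circ> \<sigma>) = tensorO k D X S j"
proof -
  have prod_permute: "(\<Prod>m\<in>{1..k}. X (j (\<sigma> m)) (i (\<sigma> m))) = (\<Prod>m\<in>{1..k}. X (j m) (i m))" for i
    using prod.permute[OF assms(1), of "\<lambda>m. X (j m) (i m)"] by simp
  have "tensorO k D X S (j \<circ> \<sigma>)
      = (\<Sum>i\<in>idx k D. (\<Prod>m\<in>{1..k}. X (j (\<sigma> m)) (i (\<sigma> m))) * S (i \<circ> \<sigma>))"
    unfolding tensorO_def
    using sum.reindex_bij_betw[OF bij_betw_idx_comp_permutes[OF assms(1)],
        of "\<lambda>i. (\<Prod>m\<in>{1..k}. X (j (\<sigma> m)) (i m)) * S i"]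
    by simp
  also have "\<dots> = tensorO k D X S j"
    unfolding tensorO_def prod_permute S_inv ..
  finally show ?thesis .
qed

theorem theorem9p1:
  fixes k D N :: nat and G :: "(nat \<Rightarrow> nat) set"
    and \<Theta> :: "(nat \<Rightarrow> nat) \<Rightarrow> real" and X :: "nat \<Rightarrow> nat \<Rightarrow> real"
  assumes "0 < k" "0 < D" "0 < N"
    and "subgroup G (sym_group k)"
    and "\<sigma> \<in> G" and "j \<in> idx k N"
  shows "softmaxT k N (tensorO k D X (symS G \<Theta>)) j
       = softmaxT k N (tensorO k D X (symS G \<Theta>)) (j \<circ> \<sigma>)"
proof -
  have "tensorO k D X (symS G \<Theta>) (j \<circ> \<sigma>) = tensorO k D X (symS G \<Theta>) j"
    using tensorO_comp_permutes sym_group_subgroup_permutes[OF assms(4,5)]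
      symS_comp_subgroup[OF assms(4,5)] .
  then show ?thesis
    unfolding softmaxT_def by simp
qed

end
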